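(* Let $n_1,n_2$ be positive integers, ${\bf P}_c=(p_{c1},\dots,p_{ck})$, $c=1,2$, probability vectors, and let $X_{1i},X_{2i}$, $1\le i\le k$, be mutually independent Poisson random variables with means $\lambda_{1i}=n_1p_{1i}$ and $\lambda_{2i}=n_2p_{2i}$ respectively. Define, with $\xi_i=p_{1i}-p_{2i}$, $$f_i(x_1,x_2)=f^*(x_1,x_2)-\xi_i^2-2\xi_i\left(\frac{x_1}{n_1}-\frac{x_2}{n_2}\right)+2\xi_i^2 .$$ Then: (1) $E f_i(X_{1i},X_{2i})=0$ for each $i$; (2) $\mathrm{Cov}\left(\sum_{i=1}^k f_i(X_{1i},X_{2i}),\sum_{i=1}^kX_{ci}\right)=0$ for $c=1,2$; (3) $\mathrm{Var}\left(\sum_{i=1}^k f_i(X_{1i},X_{2i})\right)=\sum_{i=1}^k\mathrm{Var}(f_i(X_{1i},X_{2i}))=2\sum_{i=1}^k\left(\frac{p_{1i}}{n_1}+\frac{p_{2i}}{n_2}\right)^2.$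
   Context: $f^*(x_1,x_2)=\left(\frac{x_1}{n_1}-\frac{x_2}{n_2}\right)^2-\frac{x_1}{n_1^2}-\frac{x_2}{n_2^2}$. *)

theory Defs
  imports "HOL-Probability.Probability"
begin

text \<open>A nat-valued random variable X on M is Poisson with mean lam (lam \<ge> 0; lam = 0 allowed,
  giving the point mass at 0, since 0^0 = 1).\<close>
definition poisson_rv :: "'a measure \<Rightarrow> ('a \<Rightarrow> nat) \<Rightarrow> real \<Rightarrow> bool" where
  "poisson_rv M X lam \<longleftrightarrow> X \<in> measurable M (count_space UNIV) \<and>
     (\<forall>j::nat. measure M {\<omega> \<in> space M. X \<omega> = j} = lam ^ j / fact j * exp (- lam))"

definition covariance :: "'a measure \<Rightarrow> ('a \<Rightarrow> real) \<Rightarrow> ('a \<Rightarrow> real) \<Rightarrow> real" where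
  "covariance M X Y = integral\<^sup>L M (\<lambda>\<omega>. (X \<omega> - integral\<^sup>L M X) * (Y \<omega> - integral\<^sup>L M Y))"

definition fstar :: "nat \<Rightarrow> nat \<Rightarrow> real \<Rightarrow> real \<Rightarrow> real" where
  "fstar n1 n2 x1 x2 = (x1 / real n1 - x2 / real n2)^2 - x1 / (real n1)^2 - x2 / (real n2)^2"

definition fi :: "nat \<Rightarrow> nat \<Rightarrow> real \<Rightarrow> real \<Rightarrow> real \<Rightarrow> real" where
  "fi n1 n2 \<xi> x1 x2 = fstar n1 n2 x1 x2 - \<xi>^2 - 2 * \<xi> * (x1 / real n1 - x2 / real n2) + 2 * \<xi>^2"

end

theory Submission
  imports Defs
begin

text \<open>
  With \<open>C\<^sub>1(x) = x - \<lambda>\<close> and \<open>C\<^sub>2(x) = (x - \<lambda>)\<^sup>2 - x\<close> the first two monic Charlier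
  polynomials, which are orthogonal for the Poisson law of mean \<open>\<lambda>\<close>
  (\<open>E C\<^sub>1 = E C\<^sub>2 = E C\<^sub>1C\<^sub>2 = 0\<close>, \<open>E C\<^sub>1\<^sup>2 = \<lambda>\<close>, \<open>E C\<^sub>2\<^sup>2 = 2\<lambda>\<^sup>2\<close>), one has
  \<open>f\<^sub>i = C\<^sub>2(X\<^sub>1\<^sub>i)/n\<^sub>1\<^sup>2 + C\<^sub>2(X\<^sub>2\<^sub>i)/n\<^sub>2\<^sup>2 - 2 C\<^sub>1(X\<^sub>1\<^sub>i) C\<^sub>1(X\<^sub>2\<^sub>i)/(n\<^sub>1n\<^sub>2)\<close>.
  By independence every product of Charlier polynomials in distinct variables factorises, so
  \<open>f\<^sub>i\<close> is centred, orthogonal to each \<open>C\<^sub>1(X\<^sub>c\<^sub>j) = X\<^sub>c\<^sub>j - E X\<^sub>c\<^sub>j\<close> and to every \<open>f\<^sub>j\<close>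
  with \<open>j \<noteq> i\<close>, and its second moment is
  \<open>2\<lambda>\<^sub>1\<^sup>2/n\<^sub>1\<^sup>4 + 2\<lambda>\<^sub>2\<^sup>2/n\<^sub>2\<^sup>4 + 4\<lambda>\<^sub>1\<lambda>\<^sub>2/(n\<^sub>1n\<^sub>2)\<^sup>2 = 2(p\<^sub>1\<^sub>i/n\<^sub>1 + p\<^sub>2\<^sub>i/n\<^sub>2)\<^sup>2\<close>.
  The Charlier moments reduce to the factorial moments \<open>E X(X-1)\<cdots>(X-m+1) = \<lambda>\<^sup>m\<close>.
\<close>

definition poisson_weight :: "real \<Rightarrow> nat \<Rightarrow> real" where
  "poisson_weight l j = l ^ j / fact j * exp (- l)"

definition ffact :: "nat \<Rightarrow> real \<Rightarrow> real" where
  "ffact m x = (\<Prod>i<m. x - real i)"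

lemma ffact_0: "ffact 0 x = 1"
  by (simp add: ffact_def)

lemma ffact_Suc: "ffact (Suc m) x = ffact m x * (x - real m)"
  by (simp add: ffact_def)

lemma ffact_of_nat_add: "ffact m (real (j + m)) = fact (j + m) / fact j"
proof (induction m arbitrary: j)
  case 0
  then show ?case by (simp add: ffact_def)
next
  case (Suc m)
  have "ffact (Suc m) (real (j + Suc m)) = ffact m (real (Suc j + m)) * (real j + 1)"
    by (simp add: ffact_def)
  also have "\<dots> = fact (j + Suc m) / fact j"
    unfolding Suc.IH by (simp add: divide_simps)
  finally show ?case .
qed

lemma ffact_of_nat_eq_0: "j < m \<Longrightarrow> ffact m (real j) = 0"
  unfolding ffact_def by (rule prod_zero) auto

lemma ffact_of_nat_nonneg: "ffact m (real j) \<ge> 0"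
proof (cases "j < m")
  case False
  then show ?thesis unfolding ffact_def by (intro prod_nonneg) auto
qed (simp add: ffact_of_nat_eq_0)

lemma poisson_weight_ffact_sums: "(\<lambda>j. poisson_weight l j * ffact m (real j)) sums (l ^ m)"
proof -
  have "(\<lambda>j. l ^ m * exp (- l) * (l ^ j / fact j)) sums (l ^ m * exp (- l) * exp l)"
    using exp_converges[of l] by (intro sums_mult) (simp add: field_simps)
  moreover have "poisson_weight l (j + m) * ffact m (real (j + m)) = l ^ m * exp (- l) * (l ^ j / fact j)" for j
    unfolding ffact_of_nat_add by (simp add: poisson_weight_def power_add field_simps)
  moreover have "l ^ m * exp (- l) * exp l = l ^ m"
    by (simp add: exp_minus)
  ultimately have "(\<lambda>j. poisson_weight l (j + m) * ffact m (real (j + m))) sums (l ^ m)"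
    by (simp only:)
  then show ?thesis
    by (subst (asm) sums_zero_iff_shift) (auto simp: ffact_of_nat_eq_0)
qed

definition charlier1 :: "real \<Rightarrow> real \<Rightarrow> real" where
  "charlier1 l x = x - l"

definition charlier2 :: "real \<Rightarrow> real \<Rightarrow> real" where
  "charlier2 l x = (x - l)\<^sup>2 - x"

locale poisson_var = prob_space M for M :: "'a measure" +
  fixes Y :: "'a \<Rightarrow> nat" and l :: real
  assumes poisson: "poisson_rv M Y l"
begin

lemma measurable_Y [measurable]: "Y \<in> measurable M (count_space UNIV)"
  using poisson by (simp add: poisson_rv_def)

lemma prob_eq: "prob {\<omega> \<in> space M. Y \<omega> = j} = poisson_weight l j"
  using poisson by (simp add: poisson_rv_def poisson_weight_def)

lemma mean_nonneg: "0 \<le> l"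
proof -
  have "0 \<le> poisson_weight l 1"
    using prob_eq[of 1] by (metis measure_nonneg)
  then show ?thesis
    by (simp add: poisson_weight_def zero_le_mult_iff)
qed

lemma poisson_weight_nonneg: "0 \<le> poisson_weight l j"
  using mean_nonneg by (simp add: poisson_weight_def)

lemma distr_eq: "distr M (count_space UNIV) Y = density (count_space UNIV) (poisson_weight l)"
proof (rule measure_eqI_countable[where A = UNIV])
  fix j :: nat
  have "emeasure (distr M (count_space UNIV) Y) {j} = prob {\<omega> \<in> space M. Y \<omega> = j}"
    by (simp add: emeasure_distr emeasure_eq_measure vimage_def Int_def conj_commute)
  then show "emeasure (distr M (count_space UNIV) Y) {j} =
      emeasure (density (count_space UNIV) (poisson_weight l)) {j}"
    by (simp add: prob_eq emeasure_density)
qed auto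

lemma
  fixes h :: "nat \<Rightarrow> real"
  assumes "summable (\<lambda>j. \<bar>poisson_weight l j * h j\<bar>)"
  shows integrable_comp: "integrable M (\<lambda>\<omega>. h (Y \<omega>))"
    and expectation_comp: "expectation (\<lambda>\<omega>. h (Y \<omega>)) = (\<Sum>j. poisson_weight l j * h j)"
proof -
  have int: "integrable (count_space UNIV) (\<lambda>j. poisson_weight l j * h j)"
    using assms by (simp add: integrable_count_space_nat_iff)
  have "integrable (distr M (count_space UNIV) Y) h"
    unfolding distr_eq using int poisson_weight_nonneg by (subst integrable_density) auto
  then show "integrable M (\<lambda>\<omega>. h (Y \<omega>))"
    by (subst (asm) integrable_distr_eq) auto
  have "expectation (\<lambda>\<omega>. h (Y \<omega>)) = integral\<^sup>L (distr M (count_space UNIV) Y) h"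
    by (simp add: integral_distr)
  also have "\<dots> = integral\<^sup>L (count_space UNIV) (\<lambda>j. poisson_weight l j * h j)"
    unfolding distr_eq using poisson_weight_nonneg by (subst integral_density) auto
  also have "\<dots> = (\<Sum>j. poisson_weight l j * h j)"
    using int by (rule integral_count_space_nat)
  finally show "expectation (\<lambda>\<omega>. h (Y \<omega>)) = (\<Sum>j. poisson_weight l j * h j)" .
qed

lemma
  shows integrable_ffact: "integrable M (\<lambda>\<omega>. ffact m (real (Y \<omega>)))"
    and expectation_ffact: "expectation (\<lambda>\<omega>. ffact m (real (Y \<omega>))) = l ^ m"
proof -
  have "summable (\<lambda>j. \<bar>poisson_weight l j * ffact m (real j)\<bar>)"
    using poisson_weight_ffact_sums[of l m] poisson_weight_nonneg ffact_of_nat_nonneg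
    by (simp add: sums_iff abs_mult)
  then show "integrable M (\<lambda>\<omega>. ffact m (real (Y \<omega>)))"
    and "expectation (\<lambda>\<omega>. ffact m (real (Y \<omega>))) = l ^ m"
    using poisson_weight_ffact_sums[of l m]
      integrable_comp[of "\<lambda>j. ffact m (real j)"] expectation_comp[of "\<lambda>j. ffact m (real j)"]
    by (simp_all add: sums_iff)
qed

lemma
  fixes g :: "real \<Rightarrow> real"
  assumes "\<And>x. g x = (\<Sum>m\<le>d. c m * ffact m x)"
  shows integrable_ffact_comb: "integrable M (\<lambda>\<omega>. g (real (Y \<omega>)))"
    and expectation_ffact_comb: "expectation (\<lambda>\<omega>. g (real (Y \<omega>))) = (\<Sum>m\<le>d. c m * l ^ m)"
  using assms by (simp_all add: integrable_ffact expectation_ffact)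

lemma
  shows integrable_real: "integrable M (\<lambda>\<omega>. real (Y \<omega>))"
    and expectation_real: "expectation (\<lambda>\<omega>. real (Y \<omega>)) = l"
  using integrable_ffact[of 1] expectation_ffact[of 1] by (simp_all add: ffact_def)

lemma
  shows integrable_charlier1: "integrable M (\<lambda>\<omega>. charlier1 l (real (Y \<omega>)))"
    and expectation_charlier1: "expectation (\<lambda>\<omega>. charlier1 l (real (Y \<omega>))) = 0"
proof -
  have "charlier1 l x = (\<Sum>m\<le>1. [- l, 1] ! m * ffact m x)" for x
    by (simp add: eval_nat_numeral ffact_0 ffact_Suc charlier1_def charlier2_def;
        simp add: algebra_simps power2_eq_square power3_eq_cube power4_eq_xxxx)
  note * = integrable_ffact_comb[OF this] expectation_ffact_comb[OF this]
  show "integrable M (\<lambda>\<omega>. charlier1 l (real (Y \<omega>)))" by (rule *)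
  show "expectation (\<lambda>\<omega>. charlier1 l (real (Y \<omega>))) = 0"
    unfolding *(2) by (simp add: eval_nat_numeral algebra_simps power2_eq_square)
qed

lemma
  shows integrable_charlier2: "integrable M (\<lambda>\<omega>. charlier2 l (real (Y \<omega>)))"
    and expectation_charlier2: "expectation (\<lambda>\<omega>. charlier2 l (real (Y \<omega>))) = 0"
proof -
  have "charlier2 l x = (\<Sum>m\<le>2. [l^2, - 2 * l, 1] ! m * ffact m x)" for x
    by (simp add: eval_nat_numeral ffact_0 ffact_Suc charlier1_def charlier2_def;
        simp add: algebra_simps power2_eq_square power3_eq_cube power4_eq_xxxx)
  note * = integrable_ffact_comb[OF this] expectation_ffact_comb[OF this]
  show "integrable M (\<lambda>\<omega>. charlier2 l (real (Y \<omega>)))" by (rule *)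
  show "expectation (\<lambda>\<omega>. charlier2 l (real (Y \<omega>))) = 0"
    unfolding *(2) by (simp add: eval_nat_numeral algebra_simps power2_eq_square)
qed

lemma
  shows integrable_charlier1_sq: "integrable M (\<lambda>\<omega>. (charlier1 l (real (Y \<omega>)))\<^sup>2)"
    and expectation_charlier1_sq: "expectation (\<lambda>\<omega>. (charlier1 l (real (Y \<omega>)))\<^sup>2) = l"
proof -
  have "(charlier1 l x)\<^sup>2 = (\<Sum>m\<le>2. [l^2, 1 - 2 * l, 1] ! m * ffact m x)" for x
    by (simp add: eval_nat_numeral ffact_0 ffact_Suc charlier1_def charlier2_def;
        simp add: algebra_simps power2_eq_square power3_eq_cube power4_eq_xxxx)
  note * = integrable_ffact_comb[OF this] expectation_ffact_comb[OF this]
  show "integrable M (\<lambda>\<omega>. (charlier1 l (real (Y \<omega>)))\<^sup>2)" by (rule *)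
  show "expectation (\<lambda>\<omega>. (charlier1 l (real (Y \<omega>)))\<^sup>2) = l"
    unfolding *(2) by (simp add: eval_nat_numeral algebra_simps power2_eq_square)
qed

lemma
  shows integrable_charlier2_mult_charlier1: "integrable M (\<lambda>\<omega>. charlier2 l (real (Y \<omega>)) * charlier1 l (real (Y \<omega>)))"
    and expectation_charlier2_mult_charlier1: "expectation (\<lambda>\<omega>. charlier2 l (real (Y \<omega>)) * charlier1 l (real (Y \<omega>))) = 0"
proof -
  have "charlier2 l x * charlier1 l x = (\<Sum>m\<le>3. [- (l^3), 3 * l^2 - 2 * l, 2 - 3 * l, 1] ! m * ffact m x)" for x
    by (simp add: eval_nat_numeral ffact_0 ffact_Suc charlier1_def charlier2_def;
        simp add: algebra_simps power2_eq_square power3_eq_cube power4_eq_xxxx)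
  note * = integrable_ffact_comb[OF this] expectation_ffact_comb[OF this]
  show "integrable M (\<lambda>\<omega>. charlier2 l (real (Y \<omega>)) * charlier1 l (real (Y \<omega>)))" by (rule *)
  show "expectation (\<lambda>\<omega>. charlier2 l (real (Y \<omega>)) * charlier1 l (real (Y \<omega>))) = 0"
    unfolding *(2) by (simp add: eval_nat_numeral algebra_simps power2_eq_square)
qed

lemma
  shows integrable_charlier2_sq: "integrable M (\<lambda>\<omega>. (charlier2 l (real (Y \<omega>)))\<^sup>2)"
    and expectation_charlier2_sq: "expectation (\<lambda>\<omega>. (charlier2 l (real (Y \<omega>)))\<^sup>2) = 2 * l\<^sup>2"
proof -
  have "(charlier2 l x)\<^sup>2 = (\<Sum>m\<le>4. [l^4, 4 * l^2 - 4 * l^3, 6 * l^2 - 8 * l + 2, 4 - 4 * l, 1] ! m * ffact m x)" for x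
    by (simp add: eval_nat_numeral ffact_0 ffact_Suc charlier1_def charlier2_def;
        simp add: algebra_simps power2_eq_square power3_eq_cube power4_eq_xxxx)
  note * = integrable_ffact_comb[OF this] expectation_ffact_comb[OF this]
  show "integrable M (\<lambda>\<omega>. (charlier2 l (real (Y \<omega>)))\<^sup>2)" by (rule *)
  show "expectation (\<lambda>\<omega>. (charlier2 l (real (Y \<omega>)))\<^sup>2) = 2 * l\<^sup>2"
    unfolding *(2) by (simp add: eval_nat_numeral algebra_simps power2_eq_square)
qed

end

definition charlier_form :: "real \<Rightarrow> real \<Rightarrow> real \<Rightarrow> real \<Rightarrow> real \<Rightarrow> real \<Rightarrow> real \<Rightarrow> real" where
  "charlier_form \<alpha> \<beta> \<gamma> l1 l2 x1 x2 =
    \<alpha> * charlier2 l1 x1 + \<beta> * charlier2 l2 x2 + \<gamma> * (charlier1 l1 x1 * charlier1 l2 x2)"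

locale indep_poisson_pair = prob_space M for M :: "'a measure" +
  fixes Y1 Y2 :: "'a \<Rightarrow> nat" and l1 l2 :: real and \<alpha> \<beta> \<gamma> :: real
  assumes poisson1: "poisson_rv M Y1 l1" and poisson2: "poisson_rv M Y2 l2"
    and indep: "indep_var (count_space UNIV) Y1 (count_space UNIV) Y2"
begin

sublocale Y1: poisson_var M Y1 l1
  by unfold_locales (rule poisson1)

sublocale Y2: poisson_var M Y2 l2
  by unfold_locales (rule poisson2)

abbreviation G :: "'a \<Rightarrow> real" where
  "G \<omega> \<equiv> charlier_form \<alpha> \<beta> \<gamma> l1 l2 (real (Y1 \<omega>)) (real (Y2 \<omega>))"

lemma
  fixes f g :: "nat \<Rightarrow> real"
  assumes "integrable M (\<lambda>\<omega>. f (Y1 \<omega>))" "integrable M (\<lambda>\<omega>. g (Y2 \<omega>))"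
  shows integrable_indep_mult: "integrable M (\<lambda>\<omega>. f (Y1 \<omega>) * g (Y2 \<omega>))"
    and expectation_indep_mult:
      "expectation (\<lambda>\<omega>. f (Y1 \<omega>) * g (Y2 \<omega>)) = expectation (\<lambda>\<omega>. f (Y1 \<omega>)) * expectation (\<lambda>\<omega>. g (Y2 \<omega>))"
proof -
  have "indep_var borel (f \<circ> Y1) borel (g \<circ> Y2)"
    by (rule indep_var_compose[OF indep]) simp_all
  then show "integrable M (\<lambda>\<omega>. f (Y1 \<omega>) * g (Y2 \<omega>))"
    and "expectation (\<lambda>\<omega>. f (Y1 \<omega>) * g (Y2 \<omega>)) = expectation (\<lambda>\<omega>. f (Y1 \<omega>)) * expectation (\<lambda>\<omega>. g (Y2 \<omega>))"
    using assms by (simp_all add: comp_def indep_var_integrable indep_var_lebesgue_integral)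
qed

lemmas charlier_moments =
  Y1.integrable_charlier1 Y1.integrable_charlier2 Y1.integrable_charlier1_sq
  Y1.integrable_charlier2_mult_charlier1 Y1.integrable_charlier2_sq
  Y2.integrable_charlier1 Y2.integrable_charlier2 Y2.integrable_charlier1_sq
  Y2.integrable_charlier2_mult_charlier1 Y2.integrable_charlier2_sq
  Y1.expectation_charlier1 Y1.expectation_charlier2 Y1.expectation_charlier1_sq
  Y1.expectation_charlier2_mult_charlier1 Y1.expectation_charlier2_sq
  Y2.expectation_charlier1 Y2.expectation_charlier2 Y2.expectation_charlier1_sq
  Y2.expectation_charlier2_mult_charlier1 Y2.expectation_charlier2_sq

lemma
  shows integrable_G: "integrable M G"
    and expectation_G: "expectation G = 0"
proof -
  note prod = integrable_indep_mult[of "\<lambda>j. charlier1 l1 (real j)" "\<lambda>j. charlier1 l2 (real j)"]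
    expectation_indep_mult[of "\<lambda>j. charlier1 l1 (real j)" "\<lambda>j. charlier1 l2 (real j)"]
  show "integrable M G" unfolding charlier_form_def
    using prod charlier_moments by simp
  show "expectation G = 0" unfolding charlier_form_def
    using prod charlier_moments by simp
qed

lemma
  shows integrable_G_mult_charlier1_Y1: "integrable M (\<lambda>\<omega>. G \<omega> * charlier1 l1 (real (Y1 \<omega>)))"
    and expectation_G_mult_charlier1_Y1: "expectation (\<lambda>\<omega>. G \<omega> * charlier1 l1 (real (Y1 \<omega>))) = 0"
proof -
  have G_mult: "G \<omega> * charlier1 l1 (real (Y1 \<omega>)) =
      \<alpha> * (charlier2 l1 (real (Y1 \<omega>)) * charlier1 l1 (real (Y1 \<omega>)))
      + \<beta> * (charlier1 l1 (real (Y1 \<omega>)) * charlier2 l2 (real (Y2 \<omega>)))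
      + \<gamma> * ((charlier1 l1 (real (Y1 \<omega>)))\<^sup>2 * charlier1 l2 (real (Y2 \<omega>)))" for \<omega>
    by (simp add: charlier_form_def algebra_simps power2_eq_square)
  note prod = integrable_indep_mult[of "\<lambda>j. charlier1 l1 (real j)" "\<lambda>j. charlier2 l2 (real j)"]
    expectation_indep_mult[of "\<lambda>j. charlier1 l1 (real j)" "\<lambda>j. charlier2 l2 (real j)"]
    integrable_indep_mult[of "\<lambda>j. (charlier1 l1 (real j))\<^sup>2" "\<lambda>j. charlier1 l2 (real j)"]
    expectation_indep_mult[of "\<lambda>j. (charlier1 l1 (real j))\<^sup>2" "\<lambda>j. charlier1 l2 (real j)"]
  show "integrable M (\<lambda>\<omega>. G \<omega> * charlier1 l1 (real (Y1 \<omega>)))"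
    unfolding G_mult using prod charlier_moments by simp
  show "expectation (\<lambda>\<omega>. G \<omega> * charlier1 l1 (real (Y1 \<omega>))) = 0"
    unfolding G_mult using prod charlier_moments by simp
qed

lemma
  shows integrable_G_mult_charlier1_Y2: "integrable M (\<lambda>\<omega>. G \<omega> * charlier1 l2 (real (Y2 \<omega>)))"
    and expectation_G_mult_charlier1_Y2: "expectation (\<lambda>\<omega>. G \<omega> * charlier1 l2 (real (Y2 \<omega>))) = 0"
proof -
  have G_mult: "G \<omega> * charlier1 l2 (real (Y2 \<omega>)) =
      \<alpha> * (charlier2 l1 (real (Y1 \<omega>)) * charlier1 l2 (real (Y2 \<omega>)))
      + \<beta> * (charlier2 l2 (real (Y2 \<omega>)) * charlier1 l2 (real (Y2 \<omega>)))
      + \<gamma> * (charlier1 l1 (real (Y1 \<omega>)) * (charlier1 l2 (real (Y2 \<omega>)))\<^sup>2)" for \<omega>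
    by (simp add: charlier_form_def algebra_simps power2_eq_square)
  note prod = integrable_indep_mult[of "\<lambda>j. charlier2 l1 (real j)" "\<lambda>j. charlier1 l2 (real j)"]
    expectation_indep_mult[of "\<lambda>j. charlier2 l1 (real j)" "\<lambda>j. charlier1 l2 (real j)"]
    integrable_indep_mult[of "\<lambda>j. charlier1 l1 (real j)" "\<lambda>j. (charlier1 l2 (real j))\<^sup>2"]
    expectation_indep_mult[of "\<lambda>j. charlier1 l1 (real j)" "\<lambda>j. (charlier1 l2 (real j))\<^sup>2"]
  show "integrable M (\<lambda>\<omega>. G \<omega> * charlier1 l2 (real (Y2 \<omega>)))"
    unfolding G_mult using prod charlier_moments by simp
  show "expectation (\<lambda>\<omega>. G \<omega> * charlier1 l2 (real (Y2 \<omega>))) = 0"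
    unfolding G_mult using prod charlier_moments by simp
qed

lemma
  shows integrable_G_sq: "integrable M (\<lambda>\<omega>. (G \<omega>)\<^sup>2)"
    and expectation_G_sq: "expectation (\<lambda>\<omega>. (G \<omega>)\<^sup>2) = 2 * \<alpha>\<^sup>2 * l1\<^sup>2 + 2 * \<beta>\<^sup>2 * l2\<^sup>2 + \<gamma>\<^sup>2 * l1 * l2"
proof -
  have G_sq: "(G \<omega>)\<^sup>2 =
      \<alpha>\<^sup>2 * (charlier2 l1 (real (Y1 \<omega>)))\<^sup>2 + \<beta>\<^sup>2 * (charlier2 l2 (real (Y2 \<omega>)))\<^sup>2
      + \<gamma>\<^sup>2 * ((charlier1 l1 (real (Y1 \<omega>)))\<^sup>2 * (charlier1 l2 (real (Y2 \<omega>)))\<^sup>2)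
      + 2 * \<alpha> * \<beta> * (charlier2 l1 (real (Y1 \<omega>)) * charlier2 l2 (real (Y2 \<omega>)))
      + 2 * \<alpha> * \<gamma> * ((charlier2 l1 (real (Y1 \<omega>)) * charlier1 l1 (real (Y1 \<omega>))) * charlier1 l2 (real (Y2 \<omega>)))
      + 2 * \<beta> * \<gamma> * (charlier1 l1 (real (Y1 \<omega>)) * (charlier2 l2 (real (Y2 \<omega>)) * charlier1 l2 (real (Y2 \<omega>))))" for \<omega>
    by (simp add: charlier_form_def algebra_simps power2_eq_square)
  note prod =
    integrable_indep_mult[of "\<lambda>j. (charlier1 l1 (real j))\<^sup>2" "\<lambda>j. (charlier1 l2 (real j))\<^sup>2"]
    expectation_indep_mult[of "\<lambda>j. (charlier1 l1 (real j))\<^sup>2" "\<lambda>j. (charlier1 l2 (real j))\<^sup>2"]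
    integrable_indep_mult[of "\<lambda>j. charlier2 l1 (real j)" "\<lambda>j. charlier2 l2 (real j)"]
    expectation_indep_mult[of "\<lambda>j. charlier2 l1 (real j)" "\<lambda>j. charlier2 l2 (real j)"]
    integrable_indep_mult[of "\<lambda>j. charlier2 l1 (real j) * charlier1 l1 (real j)" "\<lambda>j. charlier1 l2 (real j)"]
    expectation_indep_mult[of "\<lambda>j. charlier2 l1 (real j) * charlier1 l1 (real j)" "\<lambda>j. charlier1 l2 (real j)"]
    integrable_indep_mult[of "\<lambda>j. charlier1 l1 (real j)" "\<lambda>j. charlier2 l2 (real j) * charlier1 l2 (real j)"]
    expectation_indep_mult[of "\<lambda>j. charlier1 l1 (real j)" "\<lambda>j. charlier2 l2 (real j) * charlier1 l2 (real j)"]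
  show "integrable M (\<lambda>\<omega>. (G \<omega>)\<^sup>2)"
    unfolding G_sq using prod charlier_moments by simp
  show "expectation (\<lambda>\<omega>. (G \<omega>)\<^sup>2) = 2 * \<alpha>\<^sup>2 * l1\<^sup>2 + 2 * \<beta>\<^sup>2 * l2\<^sup>2 + \<gamma>\<^sup>2 * l1 * l2"
    unfolding G_sq using prod charlier_moments by (simp add: algebra_simps)
qed

end

lemma (in prob_space) indep_var_functions_of_disjoint_pairs:
  fixes Y :: "'i \<Rightarrow> 'a \<Rightarrow> 'b::countable"
  assumes indep: "indep_vars (\<lambda>_. count_space UNIV) Y I"
    and S: "{s1, s2} \<subseteq> I" and T: "{t1, t2} \<subseteq> I" and disjoint: "{s1, s2} \<inter> {t1, t2} = {}"
    and N: "space N1 = UNIV" "space N2 = UNIV"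
  shows "indep_var N1 (\<lambda>\<omega>. \<Phi> (Y s1 \<omega>) (Y s2 \<omega>)) N2 (\<lambda>\<omega>. \<Psi> (Y t1 \<omega>) (Y t2 \<omega>))"
proof -
  have measurable_pair_fun:
    "(\<lambda>f. h (f u1) (f u2)) \<in> measurable (PiM U (\<lambda>_. count_space UNIV)) N"
    if "u1 \<in> U" "u2 \<in> U" "space N = UNIV" for U u1 u2 and h :: "'b \<Rightarrow> 'b \<Rightarrow> 'c" and N
  proof -
    have component: "(\<lambda>f. f u) \<in> measurable (PiM U (\<lambda>_. count_space UNIV)) (count_space UNIV)"
      if "u \<in> U" for u
      using that by (rule measurable_component_singleton)
    have "(\<lambda>f. h x (f u2)) \<in> measurable (PiM U (\<lambda>_. count_space UNIV)) N" for x
      by (rule measurable_compose_countable[where f = "\<lambda>y _. h x y", OF _ component[OF \<open>u2 \<in> U\<close>]])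
        (simp add: \<open>space N = UNIV\<close>)
    then show ?thesis
      by (rule measurable_compose_countable[where f = "\<lambda>x f. h x (f u2)", OF _ component[OF \<open>u1 \<in> U\<close>]])
  qed
  have "indep_var N1 ((\<lambda>f. \<Phi> (f s1) (f s2)) \<circ> (\<lambda>\<omega>. restrict (\<lambda>i. Y i \<omega>) {s1, s2}))
      N2 ((\<lambda>f. \<Psi> (f t1) (f t2)) \<circ> (\<lambda>\<omega>. restrict (\<lambda>i. Y i \<omega>) {t1, t2}))"
    by (rule indep_var_compose[OF indep_var_restrict[OF indep disjoint S T]])
      (auto intro!: measurable_pair_fun N)
  then show ?thesis
    by (simp add: comp_def)
qed

lemma
  fixes f :: "'i \<Rightarrow> 'a \<Rightarrow> real" and g :: "'j \<Rightarrow> 'a \<Rightarrow> real"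
  assumes "\<And>i j. i \<in> I \<Longrightarrow> j \<in> J \<Longrightarrow> integrable M (\<lambda>\<omega>. f i \<omega> * g j \<omega>)"
  shows integral_sum_mult_sum: "(\<integral>\<omega>. (\<Sum>i\<in>I. f i \<omega>) * (\<Sum>j\<in>J. g j \<omega>) \<partial>M)
      = (\<Sum>i\<in>I. \<Sum>j\<in>J. \<integral>\<omega>. f i \<omega> * g j \<omega> \<partial>M)"
  using assms by (simp add: sum_product Bochner_Integration.integral_sum)

locale poisson_two_samples = prob_space M for M :: "'a measure" +
  fixes I :: "'i set" and X :: "nat \<Rightarrow> 'i \<Rightarrow> 'a \<Rightarrow> nat" and lam :: "nat \<Rightarrow> 'i \<Rightarrow> real"
    and \<alpha> \<beta> \<gamma> :: real
  assumes finite_I: "finite I"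
    and indep: "indep_vars (\<lambda>_. count_space UNIV) (\<lambda>(c, i). X c i) ({1, 2} \<times> I)"
    and poisson: "\<And>c i. c \<in> {1, 2} \<Longrightarrow> i \<in> I \<Longrightarrow> poisson_rv M (X c i) (lam c i)"
begin

abbreviation F :: "'i \<Rightarrow> 'a \<Rightarrow> real" where
  "F i \<omega> \<equiv> charlier_form \<alpha> \<beta> \<gamma> (lam 1 i) (lam 2 i) (real (X 1 i \<omega>)) (real (X 2 i \<omega>))"

lemma poisson_var_X: "c \<in> {1, 2} \<Longrightarrow> i \<in> I \<Longrightarrow> poisson_var M (X c i) (lam c i)"
  by unfold_locales (rule poisson)

lemma indep_var_blocks:
  assumes "i \<in> I" "j \<in> I" "i \<noteq> j" "c \<in> {1, 2}" "d \<in> {1, 2}"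
  shows "indep_var borel (\<lambda>\<omega>. \<Phi> (X 1 i \<omega>) (X 2 i \<omega>) :: real) borel (\<lambda>\<omega>. \<Psi> (X c j \<omega>) (X d j \<omega>) :: real)"
proof -
  have "{(1, i), (2, i)} \<subseteq> {1, 2} \<times> I" "{(c, j), (d, j)} \<subseteq> {1, 2} \<times> I"
    "{(1::nat, i), (2, i)} \<inter> {(c, j), (d, j)} = {}"
    using assms by auto
  from indep_var_functions_of_disjoint_pairs[OF indep this, of borel borel \<Phi> \<Psi>]
  show ?thesis by simp
qed

lemma indep_poisson_pair_block: "i \<in> I \<Longrightarrow> indep_poisson_pair M (X 1 i) (X 2 i) (lam 1 i) (lam 2 i)"
proof -
  assume i: "i \<in> I"
  then have "{(1, i), (1, i)} \<subseteq> {1, 2} \<times> I" "{(2, i), (2, i)} \<subseteq> {1, 2} \<times> I"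
    "{(1, i), (1, i)} \<inter> {(2::nat, i), (2, i)} = {}"
    by auto
  from indep_var_functions_of_disjoint_pairs[OF indep this, of "count_space UNIV" "count_space UNIV"
      "\<lambda>x _. x" "\<lambda>x _. x"]
  have "indep_var (count_space UNIV) (X 1 i) (count_space UNIV) (X 2 i)"
    by (simp add: eta_contract_eq)
  with i show ?thesis
    by unfold_locales (simp_all add: poisson)
qed

lemma
  assumes "i \<in> I"
  shows integrable_F: "integrable M (F i)"
    and expectation_F: "expectation (F i) = 0"
  using indep_poisson_pair.integrable_G[OF indep_poisson_pair_block[OF assms]]
    indep_poisson_pair.expectation_G[OF indep_poisson_pair_block[OF assms]]
  by simp_all

lemma
  assumes "i \<in> I" "j \<in> I" "c \<in> {1, 2}"
  shows integrable_F_mult_charlier1: "integrable M (\<lambda>\<omega>. F i \<omega> * charlier1 (lam c j) (real (X c j \<omega>)))"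
    and expectation_F_mult_charlier1: "expectation (\<lambda>\<omega>. F i \<omega> * charlier1 (lam c j) (real (X c j \<omega>))) = 0"
proof -
  have "integrable M (\<lambda>\<omega>. F i \<omega> * charlier1 (lam c j) (real (X c j \<omega>))) \<and>
      expectation (\<lambda>\<omega>. F i \<omega> * charlier1 (lam c j) (real (X c j \<omega>))) = 0"
  proof (cases "i = j")
    case True
    interpret indep_poisson_pair M "X 1 i" "X 2 i" "lam 1 i" "lam 2 i" \<alpha> \<beta> \<gamma>
      using indep_poisson_pair_block[OF \<open>i \<in> I\<close>] .
    show ?thesis
      using \<open>c \<in> {1, 2}\<close> True integrable_G_mult_charlier1_Y1 expectation_G_mult_charlier1_Y1
        integrable_G_mult_charlier1_Y2 expectation_G_mult_charlier1_Y2
      by auto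
  next
    case False
    interpret Y: poisson_var M "X c j" "lam c j"
      using poisson_var_X assms by simp
    have "indep_var borel (F i) borel (\<lambda>\<omega>. charlier1 (lam c j) (real (X c j \<omega>)))"
      using indep_var_blocks[OF assms(1,2) False assms(3,3),
          of "\<lambda>x y. charlier_form \<alpha> \<beta> \<gamma> (lam 1 i) (lam 2 i) (real x) (real y)"
            "\<lambda>x _. charlier1 (lam c j) (real x)"]
      by simp
    then show ?thesis
      using integrable_F[OF assms(1)] expectation_F[OF assms(1)]
        Y.integrable_charlier1 Y.expectation_charlier1
      by (simp add: indep_var_integrable indep_var_lebesgue_integral)
  qed
  then show "integrable M (\<lambda>\<omega>. F i \<omega> * charlier1 (lam c j) (real (X c j \<omega>)))"
    and "expectation (\<lambda>\<omega>. F i \<omega> * charlier1 (lam c j) (real (X c j \<omega>))) = 0"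
    by simp_all
qed

definition var_F :: "'i \<Rightarrow> real" where
  "var_F i = 2 * \<alpha>\<^sup>2 * (lam 1 i)\<^sup>2 + 2 * \<beta>\<^sup>2 * (lam 2 i)\<^sup>2 + \<gamma>\<^sup>2 * lam 1 i * lam 2 i"

lemma
  assumes "i \<in> I" "j \<in> I"
  shows integrable_F_mult_F: "integrable M (\<lambda>\<omega>. F i \<omega> * F j \<omega>)"
    and expectation_F_mult_F: "expectation (\<lambda>\<omega>. F i \<omega> * F j \<omega>) = (if i = j then var_F i else 0)"
proof -
  have "integrable M (\<lambda>\<omega>. F i \<omega> * F j \<omega>) \<and>
      expectation (\<lambda>\<omega>. F i \<omega> * F j \<omega>) = (if i = j then var_F i else 0)"
  proof (cases "i = j")
    case True
    interpret indep_poisson_pair M "X 1 i" "X 2 i" "lam 1 i" "lam 2 i" \<alpha> \<beta> \<gamma>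
      using indep_poisson_pair_block[OF \<open>i \<in> I\<close>] .
    show ?thesis
      using True integrable_G_sq expectation_G_sq by (simp add: power2_eq_square var_F_def)
  next
    case False
    have "indep_var borel (F i) borel (F j)"
      using indep_var_blocks[OF assms False, of 1 2
          "\<lambda>x y. charlier_form \<alpha> \<beta> \<gamma> (lam 1 i) (lam 2 i) (real x) (real y)"
          "\<lambda>x y. charlier_form \<alpha> \<beta> \<gamma> (lam 1 j) (lam 2 j) (real x) (real y)"]
      by simp
    then show ?thesis
      using False integrable_F[OF assms(1)] expectation_F[OF assms(1)] integrable_F[OF assms(2)]
      by (simp add: indep_var_integrable indep_var_lebesgue_integral)
  qed
  then show "integrable M (\<lambda>\<omega>. F i \<omega> * F j \<omega>)"
    and "expectation (\<lambda>\<omega>. F i \<omega> * F j \<omega>) = (if i = j then var_F i else 0)"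
    by simp_all
qed

lemma expectation_sum_F: "expectation (\<lambda>\<omega>. \<Sum>i\<in>I. F i \<omega>) = 0"
  using integrable_F expectation_F by (simp add: Bochner_Integration.integral_sum)

lemma covariance_sum_F_sum_X:
  assumes "c \<in> {1, 2}"
  shows "covariance M (\<lambda>\<omega>. \<Sum>i\<in>I. F i \<omega>) (\<lambda>\<omega>. \<Sum>i\<in>I. real (X c i \<omega>)) = 0"
proof -
  have "expectation (\<lambda>\<omega>. \<Sum>i\<in>I. real (X c i \<omega>)) = (\<Sum>i\<in>I. lam c i)"
    using poisson_var.integrable_real[OF poisson_var_X[OF assms]]
      poisson_var.expectation_real[OF poisson_var_X[OF assms]]
    by (subst Bochner_Integration.integral_sum) auto
  then have "covariance M (\<lambda>\<omega>. \<Sum>i\<in>I. F i \<omega>) (\<lambda>\<omega>. \<Sum>i\<in>I. real (X c i \<omega>))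
      = expectation (\<lambda>\<omega>. (\<Sum>i\<in>I. F i \<omega>) * (\<Sum>j\<in>I. charlier1 (lam c j) (real (X c j \<omega>))))"
    unfolding covariance_def expectation_sum_F by (simp add: charlier1_def sum_subtractf)
  also have "\<dots> = 0"
    using assms integrable_F_mult_charlier1 expectation_F_mult_charlier1
    by (simp add: integral_sum_mult_sum)
  finally show ?thesis .
qed

lemma variance_sum_F: "variance (\<lambda>\<omega>. \<Sum>i\<in>I. F i \<omega>) = (\<Sum>i\<in>I. var_F i)"
proof -
  have "variance (\<lambda>\<omega>. \<Sum>i\<in>I. F i \<omega>) = expectation (\<lambda>\<omega>. (\<Sum>i\<in>I. F i \<omega>) * (\<Sum>j\<in>I. F j \<omega>))"
    unfolding expectation_sum_F by (simp add: power2_eq_square)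
  also have "\<dots> = (\<Sum>i\<in>I. var_F i)"
    using integrable_F_mult_F expectation_F_mult_F
    by (simp add: integral_sum_mult_sum finite_I)
  finally show ?thesis .
qed

lemma variance_F: "i \<in> I \<Longrightarrow> variance (F i) = var_F i"
  using expectation_F expectation_F_mult_F[of i i] by (simp add: power2_eq_square)

end

lemma fi_eq_charlier_form:
  assumes "n1 > 0" "n2 > 0"
  shows "fi n1 n2 (p1 - p2) x1 x2 = charlier_form (1 / (real n1)\<^sup>2) (1 / (real n2)\<^sup>2)
    (- 2 / (real n1 * real n2)) (real n1 * p1) (real n2 * p2) x1 x2"
  using assms
  by (simp add: fi_def fstar_def charlier_form_def charlier1_def charlier2_def power2_eq_square)
    (simp add: field_simps)

theorem lemma2:
  fixes M :: "'a measure" and n :: "nat \<Rightarrow> nat" and k :: nat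
    and p :: "nat \<Rightarrow> nat \<Rightarrow> real" and X :: "nat \<Rightarrow> nat \<Rightarrow> 'a \<Rightarrow> nat"
  assumes "prob_space M"
    and "n 1 > 0" and "n 2 > 0"
    and "\<And>c i. c \<in> {1,2} \<Longrightarrow> i \<in> {1..k} \<Longrightarrow> p c i \<ge> 0"
    and "\<And>c. c \<in> {1,2} \<Longrightarrow> (\<Sum>i=1..k. p c i) = 1"
    and "prob_space.indep_vars M (\<lambda>_. count_space UNIV) (\<lambda>(c,i). X c i) ({1,2} \<times> {1..k})"
    and "\<And>c i. c \<in> {1,2} \<Longrightarrow> i \<in> {1..k} \<Longrightarrow> poisson_rv M (X c i) (real (n c) * p c i)"
  defines "F \<equiv> \<lambda>i \<omega>. fi (n 1) (n 2) (p 1 i - p 2 i) (real (X 1 i \<omega>)) (real (X 2 i \<omega>))"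
  shows "(\<forall>i\<in>{1..k}. prob_space.expectation M (F i) = 0)
    \<and> (\<forall>c\<in>{1,2}. covariance M (\<lambda>\<omega>. \<Sum>i=1..k. F i \<omega>) (\<lambda>\<omega>. \<Sum>i=1..k. real (X c i \<omega>)) = 0)
    \<and> prob_space.variance M (\<lambda>\<omega>. \<Sum>i=1..k. F i \<omega>) = (\<Sum>i=1..k. prob_space.variance M (F i))
    \<and> (\<Sum>i=1..k. prob_space.variance M (F i))
        = 2 * (\<Sum>i=1..k. (p 1 i / real (n 1) + p 2 i / real (n 2))^2)"
proof -
  interpret prob_space M
    by (fact assms(1))
  interpret S: poisson_two_samples M "{1..k}" X "\<lambda>c i. real (n c) * p c i"
    "1 / (real (n 1))\<^sup>2" "1 / (real (n 2))\<^sup>2" "- 2 / (real (n 1) * real (n 2))"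
    using assms(1,6,7) by (simp add: poisson_two_samples_def poisson_two_samples_axioms_def)
  have F_eq: "F = (\<lambda>i \<omega>. S.F i \<omega>)"
    unfolding F_def using assms(2,3) by (simp only: fi_eq_charlier_form)
  have var_F_eq: "S.var_F i = 2 * (p 1 i / real (n 1) + p 2 i / real (n 2))\<^sup>2" for i
    using assms(2,3) unfolding S.var_F_def by (simp add: field_simps power2_eq_square)
  show ?thesis
    unfolding F_eq
  proof (intro conjI ballI)
    show "expectation (S.F i) = 0" if "i \<in> {1..k}" for i
      using S.expectation_F[OF that] .
    show "covariance M (\<lambda>\<omega>. \<Sum>i=1..k. S.F i \<omega>) (\<lambda>\<omega>. \<Sum>i=1..k. real (X c i \<omega>)) = 0"
      if "c \<in> {1, 2}" for c
      using S.covariance_sum_F_sum_X[OF that] .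
    have sum_variance: "(\<Sum>i=1..k. variance (S.F i)) = (\<Sum>i=1..k. S.var_F i)"
      by (intro sum.cong refl S.variance_F)
    show "variance (\<lambda>\<omega>. \<Sum>i=1..k. S.F i \<omega>) = (\<Sum>i=1..k. variance (S.F i))"
      unfolding sum_variance by (rule S.variance_sum_F)
    show "(\<Sum>i=1..k. variance (S.F i)) = 2 * (\<Sum>i=1..k. (p 1 i / real (n 1) + p 2 i / real (n 2))\<^sup>2)"
      unfolding sum_variance var_F_eq by (simp add: sum_distrib_left)
  qed
qed

end
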